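(* Let $N_e, N_r \ge 1$ be integers. For every binary tensor $\mathcal{X} = (x_{ijk}) \in \{0,1\}^{N_e \times N_e \times N_r}$ there exist a positive integer $D$, a real number $\Delta > 0$, and matrices $A \in \{+\Delta,-\Delta\}^{N_e \times D}$, $B \in \{+\Delta,-\Delta\}^{N_e \times D}$, $C \in \{+\Delta,-\Delta\}^{N_r \times D}$ such that $$\mathcal{X} = \sum_{d=1}^{D} \mathbf{a}_d \otimes \mathbf{b}_d \otimes \mathbf{c}_d,$$ i.e. $x_{ijk} = \sum_{d=1}^D A_{id} B_{jd} C_{kd}$ for all $i,j \in [N_e]$, $k \in [N_r]$.
   Context: $[n]=\{1,\dots,n\}$. $\mathbf{a}_d,\mathbf{b}_d,\mathbf{c}_d$ denote the $d$-th columns of $A,B,C$, and $\mathbf{u}\otimes\mathbf{v}\otimes\mathbf{w}$ is the 3-way outer product with entries $(\mathbf{u}\otimes\mathbf{v}\otimes\mathbf{w})_{ijk}=u_iv_jw_k$. *)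

theory Defs
  imports Main "HOL.Real"
begin

end

theory Submission
  imports Defs
begin

text \<open>Tensors admitting a CP decomposition with all factor entries in \<open>{\<Delta>, -\<Delta>}\<close> are closed
  under addition (concatenate the factor columns). With \<open>s\<^sub>i\<^sub>0\<close> the sign vector that is \<open>+\<Delta>\<close>
  at \<open>i\<^sub>0\<close> and \<open>-\<Delta>\<close> elsewhere, \<open>\<Delta> + s\<^sub>i\<^sub>0\<close> is \<open>2\<Delta>\<close> times the unit vector at \<open>i\<^sub>0\<close>;
  expanding the product of three such sums writes \<open>(2\<Delta>)\<^sup>3 e\<^sub>i\<^sub>0 \<otimes> e\<^sub>j\<^sub>0 \<otimes> e\<^sub>k\<^sub>0\<close> as eight
  sign rank-one terms. Taking \<open>\<Delta> = 1/2\<close> and summing over the ones of \<open>X\<close> gives the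
  decomposition; two cancelling terms make \<open>D \<ge> 1\<close>.\<close>

definition sign_cp :: "real \<Rightarrow> nat \<Rightarrow> (nat \<Rightarrow> nat \<Rightarrow> nat \<Rightarrow> real) \<Rightarrow> bool" where
  "sign_cp \<Delta> D T \<longleftrightarrow> (\<exists>A B C.
     (\<forall>i d. d < D \<longrightarrow> A i d \<in> {\<Delta>, -\<Delta>}) \<and>
     (\<forall>j d. d < D \<longrightarrow> B j d \<in> {\<Delta>, -\<Delta>}) \<and>
     (\<forall>k d. d < D \<longrightarrow> C k d \<in> {\<Delta>, -\<Delta>}) \<and>
     T = (\<lambda>i j k. \<Sum>d<D. A i d * B j d * C k d))"

lemma sum_lessThan_add:
  fixes f :: "nat \<Rightarrow> 'a::comm_monoid_add"
  shows "(\<Sum>d<m + n. f d) = (\<Sum>d<m. f d) + (\<Sum>d<n. f (m + d))"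
  by (induction n) (auto simp: add.assoc)

lemma sign_cp_0: "sign_cp \<Delta> 0 (\<lambda>i j k. 0)"
  unfolding sign_cp_def by auto

lemma sign_cp_rank1:
  assumes "\<And>i. a i \<in> {\<Delta>, -\<Delta>}" "\<And>j. b j \<in> {\<Delta>, -\<Delta>}" "\<And>k. c k \<in> {\<Delta>, -\<Delta>}"
  shows "sign_cp \<Delta> 1 (\<lambda>i j k. a i * b j * c k)"
  unfolding sign_cp_def
  by (rule exI[of _ "\<lambda>i d. a i"], rule exI[of _ "\<lambda>j d. b j"], rule exI[of _ "\<lambda>k d. c k"])
    (use assms in auto)

lemma sign_cp_add:
  assumes "sign_cp \<Delta> D1 T1" "sign_cp \<Delta> D2 T2"
  shows "sign_cp \<Delta> (D1 + D2) (\<lambda>i j k. T1 i j k + T2 i j k)"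
proof -
  obtain A1 B1 C1 where 1: "\<forall>i d. d < D1 \<longrightarrow> A1 i d \<in> {\<Delta>, -\<Delta>}"
    "\<forall>j d. d < D1 \<longrightarrow> B1 j d \<in> {\<Delta>, -\<Delta>}" "\<forall>k d. d < D1 \<longrightarrow> C1 k d \<in> {\<Delta>, -\<Delta>}"
    "T1 = (\<lambda>i j k. \<Sum>d<D1. A1 i d * B1 j d * C1 k d)"
    using assms(1) unfolding sign_cp_def by blast
  obtain A2 B2 C2 where 2: "\<forall>i d. d < D2 \<longrightarrow> A2 i d \<in> {\<Delta>, -\<Delta>}"
    "\<forall>j d. d < D2 \<longrightarrow> B2 j d \<in> {\<Delta>, -\<Delta>}" "\<forall>k d. d < D2 \<longrightarrow> C2 k d \<in> {\<Delta>, -\<Delta>}"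
    "T2 = (\<lambda>i j k. \<Sum>d<D2. A2 i d * B2 j d * C2 k d)"
    using assms(2) unfolding sign_cp_def by blast
  define A where "A i d = (if d < D1 then A1 i d else A2 i (d - D1))" for i d
  define B where "B j d = (if d < D1 then B1 j d else B2 j (d - D1))" for j d
  define C where "C k d = (if d < D1 then C1 k d else C2 k (d - D1))" for k d
  have "(\<lambda>i j k. T1 i j k + T2 i j k) = (\<lambda>i j k. \<Sum>d<D1 + D2. A i d * B j d * C k d)"
    unfolding sum_lessThan_add 1(4) 2(4) by (simp add: A_def B_def C_def)
  moreover have "\<forall>i d. d < D1 + D2 \<longrightarrow> A i d \<in> {\<Delta>, -\<Delta>}"
    "\<forall>j d. d < D1 + D2 \<longrightarrow> B j d \<in> {\<Delta>, -\<Delta>}" "\<forall>k d. d < D1 + D2 \<longrightarrow> C k d \<in> {\<Delta>, -\<Delta>}"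
    using 1 2 by (auto simp: A_def B_def C_def)
  ultimately show ?thesis
    unfolding sign_cp_def by blast
qed

lemma sign_cp_sum:
  assumes "finite S" "\<And>t. t \<in> S \<Longrightarrow> \<exists>D. sign_cp \<Delta> D (f t)"
  shows "\<exists>D. sign_cp \<Delta> D (\<lambda>i j k. \<Sum>t\<in>S. f t i j k)"
  using assms
proof (induction S rule: finite_induct)
  case empty
  then show ?case using sign_cp_0 by auto
next
  case (insert t S)
  then obtain D1 D2 where "sign_cp \<Delta> D1 (f t)" "sign_cp \<Delta> D2 (\<lambda>i j k. \<Sum>t\<in>S. f t i j k)"
    by blast
  from sign_cp_add[OF this] show ?case
    using insert.hyps by auto
qed

lemma sign_cp_zero_2: "sign_cp \<Delta> 2 (\<lambda>i j k. 0)"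
proof -
  have "sign_cp \<Delta> (1 + 1) (\<lambda>i j k. \<Delta> * \<Delta> * \<Delta> + \<Delta> * \<Delta> * - \<Delta>)"
    by (intro sign_cp_add sign_cp_rank1) auto
  then show ?thesis
    by (simp add: numeral_2_eq_2)
qed

lemma sign_cp_binomial_product:
  assumes "\<And>i. a i \<in> {\<Delta>, -\<Delta>}" "\<And>j. b j \<in> {\<Delta>, -\<Delta>}" "\<And>k. c k \<in> {\<Delta>, -\<Delta>}"
    and "\<And>i. a' i \<in> {\<Delta>, -\<Delta>}" "\<And>j. b' j \<in> {\<Delta>, -\<Delta>}" "\<And>k. c' k \<in> {\<Delta>, -\<Delta>}"
  shows "sign_cp \<Delta> 8 (\<lambda>i j k. (a i + a' i) * (b j + b' j) * (c k + c' k))"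
proof -
  have "sign_cp \<Delta> (1 + (1 + (1 + (1 + (1 + (1 + (1 + 1)))))))
    (\<lambda>i j k. a i * b j * c k + (a i * b j * c' k + (a i * b' j * c k + (a i * b' j * c' k
      + (a' i * b j * c k + (a' i * b j * c' k + (a' i * b' j * c k + a' i * b' j * c' k)))))))"
    by (intro sign_cp_add sign_cp_rank1) (use assms in auto)
  then show ?thesis
    by (simp add: algebra_simps eval_nat_numeral)
qed

lemma sign_cp_unit_tensor:
  "sign_cp \<Delta> 8 (\<lambda>i j k. if (i, j, k) = t then (2 * \<Delta>) ^ 3 else 0)"
proof -
  obtain i0 j0 k0 where t: "t = (i0, j0, k0)"
    by (cases t) auto
  let ?s = "\<lambda>i0 i::nat. if i = i0 then \<Delta> else - \<Delta>"
  have "sign_cp \<Delta> 8 (\<lambda>i j k. (\<Delta> + ?s i0 i) * (\<Delta> + ?s j0 j) * (\<Delta> + ?s k0 k))"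
    by (rule sign_cp_binomial_product) auto
  moreover have "(\<lambda>i j k. (\<Delta> + ?s i0 i) * (\<Delta> + ?s j0 j) * (\<Delta> + ?s k0 k))
      = (\<lambda>i j k. if (i, j, k) = t then (2 * \<Delta>) ^ 3 else 0)"
    by (intro ext) (simp add: t power3_eq_cube)
  ultimately show ?thesis
    by simp
qed

lemma sign_cp_indicator:
  assumes "finite S"
  shows "\<exists>D. sign_cp (1/2) D (\<lambda>i j k. if (i, j, k) \<in> S then 1 else 0)"
proof -
  have "(2 * (1/2)) ^ 3 = (1::real)"
    by simp
  then have "sign_cp (1/2) 8 (\<lambda>i j k. if (i, j, k) = t then 1 else 0)" for t
    using sign_cp_unit_tensor[of "1/2" t] by metis
  then have "\<exists>D. sign_cp (1/2) D (\<lambda>i j k. \<Sum>t\<in>S. if (i, j, k) = t then 1 else 0)"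
    by (intro sign_cp_sum[OF assms]) blast
  then show ?thesis
    using assms by (simp add: sum.delta)
qed

theorem theorem1:
  fixes Ne Nr :: nat and X :: "nat \<Rightarrow> nat \<Rightarrow> nat \<Rightarrow> real"
  assumes "Ne \<ge> 1" and "Nr \<ge> 1"
    and "\<forall>i<Ne. \<forall>j<Ne. \<forall>k<Nr. X i j k \<in> {0, 1}"
  shows "\<exists>(D::nat) (\<Delta>::real) (A::nat \<Rightarrow> nat \<Rightarrow> real) (B::nat \<Rightarrow> nat \<Rightarrow> real)
           (C::nat \<Rightarrow> nat \<Rightarrow> real).
           D \<ge> 1 \<and> \<Delta> > 0 \<and>
           (\<forall>i<Ne. \<forall>d<D. A i d \<in> {\<Delta>, -\<Delta>}) \<and>
           (\<forall>j<Ne. \<forall>d<D. B j d \<in> {\<Delta>, -\<Delta>}) \<and>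
           (\<forall>k<Nr. \<forall>d<D. C k d \<in> {\<Delta>, -\<Delta>}) \<and>
           (\<forall>i<Ne. \<forall>j<Ne. \<forall>k<Nr. X i j k = (\<Sum>d<D. A i d * B j d * C k d))"
proof -
  define S where "S = {(i, j, k). i < Ne \<and> j < Ne \<and> k < Nr \<and> X i j k = 1}"
  have "finite S"
    by (rule finite_subset[of _ "{..<Ne} \<times> {..<Ne} \<times> {..<Nr}"]) (auto simp: S_def)
  then obtain D where "sign_cp (1/2) D (\<lambda>i j k. if (i, j, k) \<in> S then 1 else 0)"
    using sign_cp_indicator by blast
  from sign_cp_add[OF this sign_cp_zero_2]
  obtain A B C where sign: "\<forall>i d. d < D + 2 \<longrightarrow> A i d \<in> {1/2::real, -1/2}"
    "\<forall>j d. d < D + 2 \<longrightarrow> B j d \<in> {1/2, -1/2}" "\<forall>k d. d < D + 2 \<longrightarrow> C k d \<in> {1/2, -1/2}"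
    and decomp: "(\<lambda>i j k. if (i, j, k) \<in> S then 1 else 0)
      = (\<lambda>i j k. \<Sum>d<D + 2. A i d * B j d * C k d)"
    unfolding sign_cp_def by auto
  have "X i j k = (\<Sum>d<D + 2. A i d * B j d * C k d)" if "i < Ne" "j < Ne" "k < Nr" for i j k
  proof -
    have "X i j k \<in> {0, 1}"
      using assms(3) that by blast
    then have "X i j k = (if (i, j, k) \<in> S then 1 else 0)"
      using that by (auto simp: S_def)
    then show ?thesis
      using fun_cong[OF fun_cong[OF fun_cong[OF decomp]]] by presburger
  qed
  then show ?thesis
    using sign by (intro exI[of _ "D + 2"] exI[of _ "1/2"] exI[of _ A] exI[of _ B] exI[of _ C]) auto
qed

end
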